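(* Let $A\in\mathbb{R}^{n\times n}$. The following are equivalent: (i) there exists a vector $v>0$ with $(A^T-I)v=0$, and $A-I+\mathrm{diag}(d)$ is a nonsingular $M$-matrix for every $d\in\mathbb{R}^n$ with $d\ge 0$ and $d\neq 0$; (ii) $A-I$ is an irreducible singular $M$-matrix.
   Context: A $Z$-matrix is a real square matrix whose off-diagonal entries are all nonpositive; any $Z$-matrix can be written $sI-B$ with $B\ge 0$ entrywise, and it is a nonsingular $M$-matrix if $s>\rho(B)$ and a singular $M$-matrix if $s=\rho(B)$, where $\rho$ is spectral radius. A square matrix $M$ is reducible if there is a permutation matrix $P$ with $P^TMP=\begin{bmatrix}M_{11}&M_{12}\\0&M_{22}\end{bmatrix}$ where $M_{11},M_{22}$ are square (nonempty) blocks; it is irreducible otherwise. Vector inequalities $v>0$, $d\ge 0$ are componentwise. *)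

theory Defs
  imports "Jordan_Normal_Form.Spectral_Radius"
begin

definition nonneg_mat :: "nat \<Rightarrow> real mat \<Rightarrow> bool" where
  "nonneg_mat n B \<longleftrightarrow> (\<forall>i<n. \<forall>j<n. B $$ (i, j) \<ge> 0)"

definition rho :: "real mat \<Rightarrow> real" where
  "rho B = spectral_radius (map_mat complex_of_real B)"

definition nonsingular_M_matrix :: "nat \<Rightarrow> real mat \<Rightarrow> bool" where
  "nonsingular_M_matrix n M \<longleftrightarrow> M \<in> carrier_mat n n \<and>
     (\<exists>s B. B \<in> carrier_mat n n \<and> nonneg_mat n B \<and> M = s \<cdot>\<^sub>m 1\<^sub>m n - B \<and> s > rho B)"

definition singular_M_matrix :: "nat \<Rightarrow> real mat \<Rightarrow> bool" where
  "singular_M_matrix n M \<longleftrightarrow> M \<in> carrier_mat n n \<and>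
     (\<exists>s B. B \<in> carrier_mat n n \<and> nonneg_mat n B \<and> M = s \<cdot>\<^sub>m 1\<^sub>m n - B \<and> s = rho B)"

definition perm_matrix :: "nat \<Rightarrow> (nat \<Rightarrow> nat) \<Rightarrow> real mat" where
  "perm_matrix n p = mat n n (\<lambda>(i, j). if i = p j then 1 else 0)"

(* P^T M P = [[M11, M12], [0, M22]] with M11 of size k x k, M22 of size (n-k) x (n-k), both nonempty *)
definition reducible :: "nat \<Rightarrow> real mat \<Rightarrow> bool" where
  "reducible n M \<longleftrightarrow> (\<exists>p k. p permutes {..<n} \<and> 0 < k \<and> k < n \<and>
     (let P = perm_matrix n p; N = transpose_mat P * M * P in
        \<forall>i j. k \<le> i \<and> i < n \<and> j < k \<longrightarrow> N $$ (i, j) = 0))"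

definition irreducible_mat :: "nat \<Rightarrow> real mat \<Rightarrow> bool" where
  "irreducible_mat n M \<longleftrightarrow> M \<in> carrier_mat n n \<and> \<not> reducible n M"

definition diag_vec :: "real vec \<Rightarrow> real mat" where
  "diag_vec d = mat (dim_vec d) (dim_vec d) (\<lambda>(i, j). if i = j then d $ i else 0)"

end

theory Submission
  imports Defs
begin

text \<open>
  Write \<open>A - I = sI - B\<close> with \<open>B \<ge> 0\<close>. If \<open>A - I\<close> is an irreducible singular M-matrix, then
  \<open>s = \<rho>(B)\<close> with \<open>B\<close> irreducible, and the Perron vector of \<open>B\<^sup>T\<close> is a positive null vector
  of \<open>A\<^sup>T - I\<close>. Moreover \<open>A - I + diag d = (s + c)I - C\<close> with \<open>C = B + cI - diag d \<ge> 0\<close>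
  for \<open>c = \<Sum>d\<^sub>i\<close>; if \<open>\<rho>(C) \<ge> s + c\<close>, a subinvariant vector \<open>y\<close> of \<open>C\<close> would satisfy
  \<open>sy + d\<circ>y \<le> By\<close>, so \<open>y\<close> is a positive Perron vector of \<open>B\<close> and \<open>d\<circ>y = 0\<close>, forcing \<open>d = 0\<close>.

  Conversely, perturbing by a unit vector shows that \<open>A - I\<close> is a Z-matrix, so
  \<open>A - I = sI - B\<close> with \<open>B \<ge> 0\<close> and \<open>B\<^sup>T v = sv\<close> for the positive null vector \<open>v\<close>; the
  Collatz--Wielandt bounds then give \<open>\<rho>(B) = s\<close>. If \<open>A - I\<close> had a proper closed index set \<open>S\<close>,
  perturbing by the indicator of the complement of \<open>S\<close> would give a nonsingular M-matrix \<open>N\<close>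
  with \<open>N\<^sup>T w \<le> 0\<close> for the restriction \<open>w \<ge> 0\<close> of \<open>v\<close> to \<open>S\<close>, which is impossible.

  The Perron--Frobenius facts needed are derived from the boundedness of the powers of a matrix
  of spectral radius below 1, which the Jordan normal form library provides.
\<close>

lemma nonneg_matD: "nonneg_mat n B \<Longrightarrow> i < n \<Longrightarrow> j < n \<Longrightarrow> 0 \<le> B $$ (i, j)"
  unfolding nonneg_mat_def by blast

lemma mult_mat_vec_index_sum:
  fixes B :: "'a :: semiring_0 mat"
  assumes "B \<in> carrier_mat n n" and "x \<in> carrier_vec n" and "i < n"
  shows "(B *\<^sub>v x) $ i = (\<Sum>j<n. B $$ (i, j) * x $ j)"
  using assms by (auto simp: scalar_prod_def lessThan_atLeast0 intro!: sum.cong)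

lemma less_eq_vec_iff:
  fixes x :: "'a :: ord vec"
  assumes "x \<in> carrier_vec n"
  shows "x \<le> y \<longleftrightarrow> y \<in> carrier_vec n \<and> (\<forall>i<n. x $ i \<le> y $ i)"
  using assms unfolding less_eq_vec_def carrier_vec_def by auto

lemma nonneg_nonzero_vec_pos_entry:
  fixes x :: "real vec"
  assumes "0\<^sub>v n \<le> x" and "x \<noteq> 0\<^sub>v n"
  obtains i where "i < n" and "0 < x $ i"
proof -
  have x: "x \<in> carrier_vec n" "\<And>i. i < n \<Longrightarrow> 0 \<le> x $ i"
    using assms(1) by (auto simp: less_eq_vec_iff[of _ n])
  obtain i where "i < n" "x $ i \<noteq> 0"
    using x(1) assms(2) by (metis carrier_vecD eq_vecI index_zero_vec)
  with x(2) show ?thesis using that by force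
qed

lemma smult_vec_mono:
  fixes x y :: "real vec"
  assumes "x \<in> carrier_vec n" and "x \<le> y" and "0 \<le> a"
  shows "a \<cdot>\<^sub>v x \<le> a \<cdot>\<^sub>v y"
  using assms by (auto simp: less_eq_vec_iff[of _ n] mult_left_mono)

lemma smult_mat_mult_vec:
  fixes B :: "real mat"
  assumes "B \<in> carrier_mat n n" and "x \<in> carrier_vec n"
  shows "(c \<cdot>\<^sub>m B) *\<^sub>v x = c \<cdot>\<^sub>v (B *\<^sub>v x)"
  using assms by (intro eq_vecI) (auto simp: scalar_prod_def sum_distrib_left mult.assoc)

lemma mult_mat_vec_mono:
  assumes B: "B \<in> carrier_mat n n" "nonneg_mat n B" and x: "x \<in> carrier_vec n" and le: "x \<le> y"
  shows "B *\<^sub>v x \<le> B *\<^sub>v y"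
proof -
  have y: "y \<in> carrier_vec n" and le_i: "\<And>j. j < n \<Longrightarrow> x $ j \<le> y $ j"
    using le unfolding less_eq_vec_iff[OF x] by auto
  have "(B *\<^sub>v x) $ i \<le> (B *\<^sub>v y) $ i" if "i < n" for i
    unfolding mult_mat_vec_index_sum[OF B(1) x that] mult_mat_vec_index_sum[OF B(1) y that]
    using B(2) le_i that by (intro sum_mono mult_left_mono) (auto intro: nonneg_matD)
  then show ?thesis
    using B(1) x y by (subst less_eq_vec_iff[of _ n]) auto
qed

lemma mult_mat_vec_nonneg:
  assumes "B \<in> carrier_mat n n" "nonneg_mat n B" and "0\<^sub>v n \<le> x"
  shows "0\<^sub>v n \<le> B *\<^sub>v x"
proof -
  have "B *\<^sub>v 0\<^sub>v n = 0\<^sub>v n"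
    using assms(1) by (intro eq_vecI) auto
  then show ?thesis
    using mult_mat_vec_mono[OF assms(1,2) zero_carrier_vec assms(3)] by simp
qed

lemma nonneg_mat_smult: "nonneg_mat n B \<Longrightarrow> B \<in> carrier_mat n n \<Longrightarrow> 0 \<le> c \<Longrightarrow> nonneg_mat n (c \<cdot>\<^sub>m B)"
  unfolding nonneg_mat_def by simp

lemma nonneg_mat_mult:
  assumes "A \<in> carrier_mat n n" "B \<in> carrier_mat n n" "nonneg_mat n A" "nonneg_mat n B"
  shows "nonneg_mat n (A * B)"
  unfolding nonneg_mat_def
proof (intro allI impI)
  fix i j assume ij: "i < n" "j < n"
  have "(A * B) $$ (i, j) = (\<Sum>k<n. A $$ (i, k) * B $$ (k, j))"
    using assms(1,2) ij by (auto simp: scalar_prod_def lessThan_atLeast0 intro!: sum.cong)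
  then show "0 \<le> (A * B) $$ (i, j)"
    using assms(3,4) ij by (auto intro!: sum_nonneg mult_nonneg_nonneg nonneg_matD)
qed

lemma nonneg_mat_pow:
  assumes "B \<in> carrier_mat n n" "nonneg_mat n B"
  shows "nonneg_mat n (B ^\<^sub>m k)"
proof (induction k)
  case 0
  have "dim_row B = n" using assms(1) by simp
  then show ?case by (simp add: nonneg_mat_def)
next
  case (Suc k)
  show ?case
    using nonneg_mat_mult[OF pow_carrier_mat[OF assms(1)] assms(1) Suc assms(2)] by simp
qed

lemma nonneg_mat_transpose:
  assumes "B \<in> carrier_mat n n" "nonneg_mat n B"
  shows "nonneg_mat n (transpose_mat B)"
  using assms
  unfolding nonneg_mat_def by simp

lemma diag_vec_carrier: "d \<in> carrier_vec n \<Longrightarrow> diag_vec d \<in> carrier_mat n n"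
  unfolding diag_vec_def by auto

lemma plus_smult_one_minus_diag_vec_index:
  assumes "B \<in> carrier_mat n n" "d \<in> carrier_vec n" "i < n" "j < n"
  shows "(B + (c \<cdot>\<^sub>m 1\<^sub>m n - diag_vec d)) $$ (i, j) = B $$ (i, j) + (if i = j then c - d $ i else 0)"
  using assms unfolding diag_vec_def by auto

lemma pow_mat_mult_vec_ge:
  assumes B: "B \<in> carrier_mat n n" "nonneg_mat n B" and x: "x \<in> carrier_vec n"
    and a: "0 \<le> a" and ge: "a \<cdot>\<^sub>v x \<le> B *\<^sub>v x"
  shows "a ^ k \<cdot>\<^sub>v x \<le> B ^\<^sub>m k *\<^sub>v x"
proof (induction k)
  case 0
  show ?case using B(1) x by simp
next
  case (Suc k)
  have "a ^ Suc k \<cdot>\<^sub>v x = a \<cdot>\<^sub>v (a ^ k \<cdot>\<^sub>v x)"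
    by (simp add: smult_smult_assoc)
  also have "\<dots> \<le> a \<cdot>\<^sub>v (B ^\<^sub>m k *\<^sub>v x)"
    using Suc x a by (intro smult_vec_mono[of _ n]) auto
  also have "\<dots> = B ^\<^sub>m k *\<^sub>v (a \<cdot>\<^sub>v x)"
    by (rule mult_mat_vec[OF pow_carrier_mat[OF B(1)] x, symmetric])
  also have "\<dots> \<le> B ^\<^sub>m k *\<^sub>v (B *\<^sub>v x)"
    using B x ge by (intro mult_mat_vec_mono[of _ n] nonneg_mat_pow) auto
  also have "\<dots> = B ^\<^sub>m Suc k *\<^sub>v x"
    using assoc_mult_mat_vec[OF pow_carrier_mat[OF B(1)] B(1) x, of k] by simp
  finally show ?case .
qed

lemma rho_nonneg:
  assumes "B \<in> carrier_mat n n" and "0 < n"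
  shows "0 \<le> rho B"
  using spectral_radius_mem_max(1)[of "map_mat complex_of_real B" n] assms
  unfolding rho_def by auto

lemma eigenvalue_norm_le_rho:
  assumes "B \<in> carrier_mat n n" and "eigenvalue (map_mat complex_of_real B) \<mu>"
  shows "cmod \<mu> \<le> rho B"
proof -
  have "0 < n"
    using eigenvalue_imp_nonzero_dim[OF _ assms(2), of n] assms(1) by auto
  then show ?thesis
    unfolding rho_def using assms
    by (intro spectral_radius_mem_max(2)[of _ n]) (auto simp: spectrum_def)
qed

lemma rho_eigenvector:
  assumes "B \<in> carrier_mat n n" and "0 < n"
  obtains \<mu> y where "eigenvector (map_mat complex_of_real B) y \<mu>" and "cmod \<mu> = rho B"
  using spectral_radius_mem_max(1)[of "map_mat complex_of_real B" n] assms
  unfolding rho_def spectrum_def eigenvalue_def by auto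

lemma rho_transpose:
  assumes "B \<in> carrier_mat n n"
  shows "rho (transpose_mat B) = rho B"
proof -
  let ?C = "map_mat complex_of_real B"
  have C: "?C \<in> carrier_mat n n" using assms by auto
  have "spectrum (transpose_mat ?C) = spectrum ?C"
    using spectrum_root_char_poly[OF C] spectrum_root_char_poly[of "transpose_mat ?C" n]
      char_poly_transpose_mat[OF C] C by auto
  then show ?thesis
    unfolding rho_def spectral_radius_def by (simp flip: map_mat_transpose)
qed

lemma rho_smult_le:
  assumes B: "B \<in> carrier_mat n n" and n: "0 < n" and c: "0 < c"
  shows "rho (c \<cdot>\<^sub>m B) \<le> c * rho B"
proof -
  let ?B = "map_mat complex_of_real B" and ?cB = "map_mat complex_of_real (c \<cdot>\<^sub>m B)"
  obtain \<mu> y where ev: "eigenvector ?cB y \<mu>" and \<mu>: "cmod \<mu> = rho (c \<cdot>\<^sub>m B)"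
    using rho_eigenvector[OF smult_carrier_mat[OF B] n] by blast
  have y: "y \<in> carrier_vec n" "y \<noteq> 0\<^sub>v n" and eq: "?cB *\<^sub>v y = \<mu> \<cdot>\<^sub>v y"
    using ev B unfolding eigenvector_def by auto
  have "(?B *\<^sub>v y) $ i = (\<mu> / complex_of_real c) * y $ i" if i: "i < n" for i
  proof -
    have "complex_of_real c * (?B *\<^sub>v y) $ i = (?cB *\<^sub>v y) $ i"
      using B y(1) i
      by (simp add: mult_mat_vec_index_sum[of _ n] sum_distrib_left mult.assoc
          del: index_mult_mat_vec)
    also have "\<dots> = \<mu> * y $ i" using eq y(1) i by simp
    finally show ?thesis using c by (simp add: field_simps)
  qed
  then have "?B *\<^sub>v y = (\<mu> / complex_of_real c) \<cdot>\<^sub>v y"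
    using B y(1) by (intro eq_vecI) auto
  then have "eigenvalue ?B (\<mu> / complex_of_real c)"
    using y B unfolding eigenvector_def eigenvalue_def by auto
  then have "cmod \<mu> / c \<le> rho B"
    using eigenvalue_norm_le_rho[OF B] c by (fastforce simp: norm_divide)
  with \<mu> c show ?thesis by (simp add: field_simps)
qed

lemma pow_bounded_if_rho_less_1:
  assumes B: "B \<in> carrier_mat n n" and rho: "rho B < 1"
  obtains K where "\<And>k i j. i < n \<Longrightarrow> j < n \<Longrightarrow> (B ^\<^sub>m k) $$ (i, j) \<le> K"
proof -
  obtain K where K: "\<And>k. norm_bound (map_mat complex_of_real B ^\<^sub>m k) K"
    using spectral_radius_jnf_norm_bound_less_1_upper_triangular[of "map_mat complex_of_real B" n]
      B rho unfolding rho_def by auto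
  have "(B ^\<^sub>m k) $$ (i, j) \<le> K" if "i < n" "j < n" for k i j
  proof -
    have "map_mat complex_of_real B ^\<^sub>m k = map_mat complex_of_real (B ^\<^sub>m k)"
      by (rule of_real_hom.mat_hom_pow[OF B, symmetric])
    with K[of k] that B have "norm (complex_of_real ((B ^\<^sub>m k) $$ (i, j))) \<le> K"
      unfolding norm_bound_def by auto
    then show ?thesis by simp
  qed
  then show ?thesis by (rule that)
qed

section \<open>Collatz--Wielandt bounds\<close>

lemma rho_subinvariant_vector:
  assumes B: "B \<in> carrier_mat n n" "nonneg_mat n B" and n: "0 < n"
  obtains z where "z \<in> carrier_vec n" "0\<^sub>v n \<le> z" "z \<noteq> 0\<^sub>v n" "rho B \<cdot>\<^sub>v z \<le> B *\<^sub>v z"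
proof -
  let ?B = "map_mat complex_of_real B"
  obtain \<mu> y where ev: "eigenvector ?B y \<mu>" and \<mu>: "cmod \<mu> = rho B"
    using rho_eigenvector[OF B(1) n] by blast
  have y: "y \<in> carrier_vec n" "y \<noteq> 0\<^sub>v n" and eq: "?B *\<^sub>v y = \<mu> \<cdot>\<^sub>v y"
    using ev B(1) unfolding eigenvector_def by auto
  define z where "z = vec n (\<lambda>j. cmod (y $ j))"
  have z: "z \<in> carrier_vec n" unfolding z_def by simp
  have "rho B * z $ i \<le> (B *\<^sub>v z) $ i" if i: "i < n" for i
  proof -
    have "rho B * z $ i = cmod ((?B *\<^sub>v y) $ i)"
      using eq y(1) i \<mu> by (simp add: z_def norm_mult)
    also have "\<dots> = cmod (\<Sum>j<n. complex_of_real (B $$ (i, j)) * y $ j)"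
      using B(1) y(1) i by (simp add: mult_mat_vec_index_sum[of _ n] del: index_mult_mat_vec)
    also have "\<dots> \<le> (\<Sum>j<n. cmod (complex_of_real (B $$ (i, j)) * y $ j))"
      by (rule norm_sum)
    also have "\<dots> = (\<Sum>j<n. B $$ (i, j) * z $ j)"
      using nonneg_matD[OF B(2) i] by (intro sum.cong) (auto simp: z_def norm_mult)
    also have "\<dots> = (B *\<^sub>v z) $ i"
      using B(1) z i by (simp add: mult_mat_vec_index_sum del: index_mult_mat_vec)
    finally show ?thesis .
  qed
  then have "rho B \<cdot>\<^sub>v z \<le> B *\<^sub>v z"
    using B(1) z by (subst less_eq_vec_iff[of _ n]) auto
  moreover have "0\<^sub>v n \<le> z"
    using z by (simp add: less_eq_vec_iff[of _ n] z_def)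
  moreover have "z \<noteq> 0\<^sub>v n"
  proof -
    obtain i where "i < n" "y $ i \<noteq> 0"
      using y by (metis carrier_vecD eq_vecI index_zero_vec)
    then have "z $ i \<noteq> 0\<^sub>v n $ i" by (simp add: z_def)
    then show ?thesis by metis
  qed
  ultimately show ?thesis using that z by blast
qed

lemma subinvariant_factor_le_1_if_rho_less_1:
  assumes B: "B \<in> carrier_mat n n" "nonneg_mat n B" and rho: "rho B < 1"
    and x: "x \<in> carrier_vec n" "0\<^sub>v n \<le> x" "x \<noteq> 0\<^sub>v n" and sub: "a \<cdot>\<^sub>v x \<le> B *\<^sub>v x"
  shows "a \<le> 1"
proof (rule ccontr)
  assume "\<not> a \<le> 1"
  obtain i0 where i0: "i0 < n" "0 < x $ i0"
    using nonneg_nonzero_vec_pos_entry[OF x(2,3)] .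
  have x_nonneg: "\<And>j. j < n \<Longrightarrow> 0 \<le> x $ j"
    using x by (auto simp: less_eq_vec_iff[of _ n])
  obtain K where K: "\<And>k j. j < n \<Longrightarrow> (B ^\<^sub>m k) $$ (i0, j) \<le> K"
    using pow_bounded_if_rho_less_1[OF B(1) rho] i0(1) by metis
  have bounded: "a ^ k * x $ i0 \<le> K * (\<Sum>j<n. x $ j)" for k
  proof -
    have "a ^ k \<cdot>\<^sub>v x \<le> B ^\<^sub>m k *\<^sub>v x"
      using pow_mat_mult_vec_ge[OF B x(1) _ sub] \<open>\<not> a \<le> 1\<close> by simp
    then have "a ^ k * x $ i0 \<le> (B ^\<^sub>m k *\<^sub>v x) $ i0"
      using x(1) i0(1) by (auto simp: less_eq_vec_iff[of _ n])
    also have "\<dots> = (\<Sum>j<n. (B ^\<^sub>m k) $$ (i0, j) * x $ j)"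
      using B(1) x(1) i0(1) by (simp add: mult_mat_vec_index_sum del: index_mult_mat_vec)
    also have "\<dots> \<le> (\<Sum>j<n. K * x $ j)"
      using K x_nonneg by (intro sum_mono mult_right_mono) auto
    finally show ?thesis by (simp add: sum_distrib_left)
  qed
  obtain k where "K * (\<Sum>j<n. x $ j) / x $ i0 < a ^ k"
    using real_arch_pow \<open>\<not> a \<le> 1\<close> by (metis not_le)
  with bounded[of k] i0(2) show False by (simp add: field_simps)
qed

lemma le_rho_if_subinvariant:
  assumes B: "B \<in> carrier_mat n n" "nonneg_mat n B"
    and x: "x \<in> carrier_vec n" "0\<^sub>v n \<le> x" "x \<noteq> 0\<^sub>v n" and sub: "r \<cdot>\<^sub>v x \<le> B *\<^sub>v x"
  shows "r \<le> rho B"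
proof (rule ccontr)
  assume "\<not> r \<le> rho B"
  obtain i0 where "i0 < n" using nonneg_nonzero_vec_pos_entry[OF x(2,3)] by blast
  then have n: "0 < n" by simp
  have "0 \<le> rho B" by (rule rho_nonneg[OF B(1) n])
  \<comment> \<open>rescale so that the scaled spectral radius is below 1 while the factor exceeds 1\<close>
  define c where "c = 2 / (rho B + r)"
  have c: "0 < c" "1 < c * r" "c * rho B < 1"
    using \<open>0 \<le> rho B\<close> \<open>\<not> r \<le> rho B\<close> by (auto simp: c_def field_simps)
  have C: "c \<cdot>\<^sub>m B \<in> carrier_mat n n" "nonneg_mat n (c \<cdot>\<^sub>m B)"
    using B c(1) nonneg_mat_smult by auto
  have "rho (c \<cdot>\<^sub>m B) < 1" using rho_smult_le[OF B(1) n c(1)] c(3) by linarith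
  moreover have "(c * r) \<cdot>\<^sub>v x \<le> (c \<cdot>\<^sub>m B) *\<^sub>v x"
  proof -
    have "(c * r) \<cdot>\<^sub>v x = c \<cdot>\<^sub>v (r \<cdot>\<^sub>v x)" by (simp add: smult_smult_assoc)
    also have "\<dots> \<le> c \<cdot>\<^sub>v (B *\<^sub>v x)" using sub x c(1) by (intro smult_vec_mono[of _ n]) auto
    finally show ?thesis using smult_mat_mult_vec[OF B(1) x(1)] by simp
  qed
  ultimately have "c * r \<le> 1"
    using subinvariant_factor_le_1_if_rho_less_1[OF C _ x] by blast
  with c(2) show False by simp
qed

lemma less_rho_if_strictly_subinvariant:
  assumes B: "B \<in> carrier_mat n n" "nonneg_mat n B" and n: "0 < n"
    and u: "u \<in> carrier_vec n" "\<And>i. i < n \<Longrightarrow> 0 < u $ i"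
    and sub: "\<And>i. i < n \<Longrightarrow> r * u $ i < (B *\<^sub>v u) $ i"
  shows "r < rho B"
proof -
  define e where "e = Min ((\<lambda>i. ((B *\<^sub>v u) $ i - r * u $ i) / u $ i) ` {..<n})"
  have "0 < e"
    unfolding e_def using n u(2) sub by (subst Min_gr_iff) auto
  have e_le: "e \<le> ((B *\<^sub>v u) $ i - r * u $ i) / u $ i" if "i < n" for i
    unfolding e_def using that by (intro Min_le) auto
  have "(r + e) * u $ i \<le> (B *\<^sub>v u) $ i" if "i < n" for i
    using e_le[OF that] u(2)[OF that] by (simp add: pos_le_divide_eq algebra_simps)
  then have "(r + e) \<cdot>\<^sub>v u \<le> B *\<^sub>v u"
    using B(1) u(1) by (subst less_eq_vec_iff[of _ n]) auto
  moreover have "0\<^sub>v n \<le> u" "u \<noteq> 0\<^sub>v n"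
    using u n by (auto simp: less_eq_vec_iff[of _ n] intro: less_imp_le)
  ultimately have "r + e \<le> rho B"
    using le_rho_if_subinvariant[OF B u(1)] by blast
  with \<open>0 < e\<close> show ?thesis by simp
qed

lemma rho_le_if_positive_superinvariant:
  assumes B: "B \<in> carrier_mat n n" "nonneg_mat n B" and n: "0 < n"
    and v: "v \<in> carrier_vec n" "\<And>i. i < n \<Longrightarrow> 0 < v $ i" and super: "B *\<^sub>v v \<le> s \<cdot>\<^sub>v v"
  shows "rho B \<le> s"
proof -
  obtain z where z: "z \<in> carrier_vec n" "0\<^sub>v n \<le> z" "z \<noteq> 0\<^sub>v n" "rho B \<cdot>\<^sub>v z \<le> B *\<^sub>v z"
    using rho_subinvariant_vector[OF B n] .
  \<comment> \<open>compare \<open>z\<close> with the smallest multiple \<open>t v\<close> dominating it, at an index where they touch\<close>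
  define t where "t = Max ((\<lambda>i. z $ i / v $ i) ` {..<n})"
  have "t \<in> (\<lambda>i. z $ i / v $ i) ` {..<n}"
    unfolding t_def using n by (intro Max_in) auto
  then obtain i0 where i0: "i0 < n" "t = z $ i0 / v $ i0" by auto
  have z_le: "z $ j \<le> t * v $ j" if "j < n" for j
  proof -
    have "z $ j / v $ j \<le> t"
      unfolding t_def using that by (intro Max_ge) auto
    then show ?thesis using v(2)[OF that] by (simp add: pos_divide_le_eq)
  qed
  obtain j where j: "j < n" "0 < z $ j"
    using nonneg_nonzero_vec_pos_entry[OF z(2,3)] .
  have "0 < t * v $ j" using z_le[OF j(1)] j(2) by linarith
  then have "0 < t" using v(2)[OF j(1)] by (simp add: zero_less_mult_iff)
  have z_i0: "z $ i0 = t * v $ i0"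
    using i0 v(2)[OF i0(1)] by simp
  then have "0 < z $ i0"
    using \<open>0 < t\<close> v(2)[OF i0(1)] by simp
  have "z \<le> t \<cdot>\<^sub>v v"
    using z(1) v(1) z_le by (subst less_eq_vec_iff[of _ n]) auto
  then have "B *\<^sub>v z \<le> B *\<^sub>v (t \<cdot>\<^sub>v v)"
    by (rule mult_mat_vec_mono[OF B z(1)])
  also have "\<dots> = t \<cdot>\<^sub>v (B *\<^sub>v v)"
    by (rule mult_mat_vec[OF B(1) v(1)])
  also have "\<dots> \<le> t \<cdot>\<^sub>v (s \<cdot>\<^sub>v v)"
    using super B(1) v(1) \<open>0 < t\<close> by (intro smult_vec_mono[of _ n]) auto
  finally have "rho B \<cdot>\<^sub>v z \<le> (t * s) \<cdot>\<^sub>v v"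
    using z(4) by (simp add: smult_smult_assoc)
  then have "rho B * z $ i0 \<le> t * s * v $ i0"
    using z(1) v(1) i0(1) by (auto simp: less_eq_vec_iff[of _ n])
  then have "rho B * z $ i0 \<le> s * z $ i0"
    using z_i0 by (simp add: mult_ac)
  with \<open>0 < z $ i0\<close> show ?thesis by simp
qed

section \<open>Irreducibility via closed index sets\<close>

text \<open>\<open>S\<close> is closed if every column indexed by \<open>S\<close> vanishes outside the rows in \<open>S\<close>;
  after permuting \<open>S\<close> to the front this is exactly the zero block of the definition of
  reducibility.\<close>

definition closed_index_set :: "nat \<Rightarrow> real mat \<Rightarrow> nat set \<Rightarrow> bool" where
  "closed_index_set n M S \<longleftrightarrow> S \<subseteq> {..<n} \<and> (\<forall>a<n. \<forall>b\<in>S. a \<notin> S \<longrightarrow> M $$ (a, b) = 0)"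

lemma perm_matrix_conj_index:
  assumes p: "p permutes {..<n}" and M: "M \<in> carrier_mat n n" and ij: "i < n" "j < n"
  shows "(transpose_mat (perm_matrix n p) * M * perm_matrix n p) $$ (i, j) = M $$ (p i, p j)"
proof -
  let ?P = "perm_matrix n p"
  have P: "?P \<in> carrier_mat n n"
    and P_index: "\<And>a b. a < n \<Longrightarrow> b < n \<Longrightarrow> ?P $$ (a, b) = (if a = p b then 1 else 0)"
    unfolding perm_matrix_def by auto
  have p_lt: "p i < n" "p j < n" using permutes_in_image[OF p] ij by auto
  have PM: "(transpose_mat ?P * M) $$ (i, b) = M $$ (p i, b)" if b: "b < n" for b
  proof -
    have "(transpose_mat ?P * M) $$ (i, b) = (\<Sum>a\<in>{0..<n}. ?P $$ (a, i) * M $$ (a, b))"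
      using P M ij b by (simp add: scalar_prod_def)
    also have "\<dots> = (\<Sum>a\<in>{0..<n}. if a = p i then M $$ (a, b) else 0)"
      using P_index ij by (intro sum.cong) auto
    also have "\<dots> = M $$ (p i, b)" using p_lt by simp
    finally show ?thesis .
  qed
  define Q where "Q = transpose_mat ?P * M"
  have "Q \<in> carrier_mat n n" unfolding Q_def using P M by simp
  then have "(Q * ?P) $$ (i, j) = (\<Sum>b\<in>{0..<n}. Q $$ (i, b) * ?P $$ (b, j))"
    using P ij by (simp add: scalar_prod_def)
  then have "(transpose_mat ?P * M * ?P) $$ (i, j)
      = (\<Sum>b\<in>{0..<n}. (transpose_mat ?P * M) $$ (i, b) * ?P $$ (b, j))"
    unfolding Q_def .
  also have "\<dots> = (\<Sum>b\<in>{0..<n}. if b = p j then M $$ (p i, b) else 0)"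
    using P_index PM ij by (intro sum.cong) auto
  also have "\<dots> = M $$ (p i, p j)" using p_lt by simp
  finally show ?thesis .
qed

lemma reducible_imp_closed_index_set:
  assumes M: "M \<in> carrier_mat n n" and red: "reducible n M"
  obtains S where "closed_index_set n M S" "S \<noteq> {}" "S \<noteq> {..<n}"
proof -
  obtain p k where p: "p permutes {..<n}" and k: "0 < k" "k < n"
    and zero: "\<And>i j. k \<le> i \<Longrightarrow> i < n \<Longrightarrow> j < k \<Longrightarrow>
      (transpose_mat (perm_matrix n p) * M * perm_matrix n p) $$ (i, j) = 0"
    using red unfolding reducible_def Let_def by blast
  define S where "S = p ` {..<k}"
  have S: "S \<subseteq> {..<n}"
    unfolding S_def using permutes_image[OF p] k by auto
  have "inj_on p {..<k}"
    by (rule inj_on_subset[OF permutes_inj[OF p]]) simp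
  then have "card S = k"
    unfolding S_def by (simp add: card_image)
  then have "S \<noteq> {}" "S \<noteq> {..<n}" using k by auto
  moreover have "M $$ (a, b) = 0" if ab: "a < n" "a \<notin> S" "b \<in> S" for a b
  proof -
    obtain j where j: "j < k" "b = p j" using ab(3) unfolding S_def by auto
    have "a \<in> p ` {..<n}" using ab(1) permutes_image[OF p] by simp
    then obtain i where i: "i < n" "a = p i" by auto
    have "k \<le> i"
    proof (rule ccontr)
      assume "\<not> k \<le> i"
      then have "a \<in> S" unfolding S_def using i(2) by simp
      with ab(2) show False ..
    qed
    moreover have "j < n" using j(1) k(2) by simp
    ultimately show ?thesis
      using zero[OF _ i(1) j(1)] perm_matrix_conj_index[OF p M i(1)] i(2) j(2) by simp
  qed
  ultimately show ?thesis
    using that S unfolding closed_index_set_def by blast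
qed

lemma permutes_initial_segment_onto:
  assumes S: "S \<subseteq> {..<n}"
  obtains p where "p permutes {..<n}" and "p ` {..<card S} = S"
proof -
  define k where "k = card S"
  define R where "R = {..<n} - S"
  have fin: "finite S" using S finite_subset by blast
  have k: "k \<le> n" unfolding k_def using card_mono[OF _ S] by simp
  have cR: "card R = n - k" unfolding R_def k_def using S fin by (simp add: card_Diff_subset)
  obtain f where f: "bij_betw f {0..<k} S"
    using ex_bij_betw_nat_finite[OF fin] unfolding k_def by auto
  obtain g where g: "bij_betw g {0..<n - k} R"
    using ex_bij_betw_nat_finite[of R] cR unfolding R_def by auto
  define p where "p i = (if i < k then f i else if i < n then g (i - k) else i)" for i
  have low: "bij_betw p {0..<k} S"
    using f by (rule bij_betw_cong[THEN iffD1, rotated]) (auto simp: p_def)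
  have "bij_betw (\<lambda>i. i - k) {k..<n} {0..<n - k}"
    by (rule bij_betw_byWitness[of _ "\<lambda>i. i + k"]) auto
  from bij_betw_trans[OF this g] have high: "bij_betw p {k..<n} R"
    by (rule bij_betw_cong[THEN iffD1, rotated]) (auto simp: p_def)
  have "bij_betw p ({0..<k} \<union> {k..<n}) (S \<union> R)"
    by (rule bij_betw_combine[OF low high]) (auto simp: R_def)
  moreover have "{0..<k} \<union> {k..<n} = {..<n}" "S \<union> R = {..<n}"
    using k S unfolding R_def by auto
  ultimately have "bij_betw p {..<n} {..<n}" by simp
  then have "p permutes {..<n}"
    by (rule bij_imp_permutes) (use k in \<open>auto simp: p_def\<close>)
  moreover have "p ` {..<k} = S"
    using low by (simp add: bij_betw_def lessThan_atLeast0)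
  ultimately show ?thesis using that unfolding k_def by blast
qed

lemma closed_index_set_imp_reducible:
  assumes M: "M \<in> carrier_mat n n" and closed: "closed_index_set n M S"
    and ne: "S \<noteq> {}" and proper: "S \<noteq> {..<n}"
  shows "reducible n M"
proof -
  have S: "S \<subseteq> {..<n}" using closed unfolding closed_index_set_def by blast
  obtain p where p: "p permutes {..<n}" "p ` {..<card S} = S"
    using permutes_initial_segment_onto[OF S] .
  let ?k = "card S"
  have k: "0 < ?k" "?k < n"
    using finite_subset[OF S] ne psubset_card_mono[of "{..<n}" S] S proper
    by (auto simp: card_gt_0_iff)
  have "(transpose_mat (perm_matrix n p) * M * perm_matrix n p) $$ (i, j) = 0"
    if ij: "?k \<le> i" "i < n" "j < ?k" for i j
  proof -
    have "p j \<in> S" using p(2) ij(3) by blast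
    moreover have "p i \<notin> S"
    proof
      assume "p i \<in> S"
      then obtain j' where "j' < ?k" "p i = p j'" using p(2) by force
      then have "i = j'" using permutes_inj[OF p(1)] by (simp add: inj_eq)
      with \<open>j' < ?k\<close> ij(1) show False by simp
    qed
    moreover have "p i < n" using permutes_in_image[OF p(1)] ij(2) by simp
    ultimately show ?thesis
      using closed perm_matrix_conj_index[OF p(1) M ij(2)] ij k
      unfolding closed_index_set_def by auto
  qed
  then show ?thesis
    unfolding reducible_def Let_def using p(1) k by blast
qed

lemma reducible_iff_closed_index_set:
  assumes "M \<in> carrier_mat n n"
  shows "reducible n M \<longleftrightarrow> (\<exists>S. closed_index_set n M S \<and> S \<noteq> {} \<and> S \<noteq> {..<n})"
proof
  assume "reducible n M"
  then obtain S where "closed_index_set n M S" "S \<noteq> {}" "S \<noteq> {..<n}"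
    by (rule reducible_imp_closed_index_set[OF assms])
  then show "\<exists>S. closed_index_set n M S \<and> S \<noteq> {} \<and> S \<noteq> {..<n}" by blast
qed (use closed_index_set_imp_reducible[OF assms] in blast)

lemma irreducible_mat_exit:
  assumes "irreducible_mat n M" and "S \<subseteq> {..<n}" "S \<noteq> {}" "S \<noteq> {..<n}"
  obtains a b where "a < n" "a \<notin> S" "b \<in> S" "M $$ (a, b) \<noteq> 0"
  using assms reducible_iff_closed_index_set[of M n]
  unfolding irreducible_mat_def closed_index_set_def by blast

lemma irreducible_mat_cong_offdiag:
  assumes "M \<in> carrier_mat n n" "N \<in> carrier_mat n n"
    and "\<And>a b. a < n \<Longrightarrow> b < n \<Longrightarrow> a \<noteq> b \<Longrightarrow> M $$ (a, b) = 0 \<longleftrightarrow> N $$ (a, b) = 0"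
  shows "irreducible_mat n M \<longleftrightarrow> irreducible_mat n N"
proof -
  have "closed_index_set n M S \<longleftrightarrow> closed_index_set n N S" for S
    using assms(3) unfolding closed_index_set_def by (metis subsetD lessThan_iff)
  then show ?thesis
    using assms(1,2) by (simp add: irreducible_mat_def reducible_iff_closed_index_set)
qed

lemma closed_index_set_transpose:
  assumes M: "M \<in> carrier_mat n n" and closed: "closed_index_set n M S"
  shows "closed_index_set n (transpose_mat M) ({..<n} - S)"
  unfolding closed_index_set_def
proof (intro conjI allI impI ballI)
  fix a b assume "a < n" "b \<in> {..<n} - S" "a \<notin> {..<n} - S"
  then have "a \<in> S" "b < n" "b \<notin> S" by auto
  then show "transpose_mat M $$ (a, b) = 0"
    using M closed \<open>a < n\<close> unfolding closed_index_set_def by auto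
qed blast

lemma reducible_of_reducible_transpose:
  assumes M: "M \<in> carrier_mat n n" and red: "reducible n (transpose_mat M)"
  shows "reducible n M"
proof -
  obtain S where S: "closed_index_set n (transpose_mat M) S" "S \<noteq> {}" "S \<noteq> {..<n}"
    using red M reducible_iff_closed_index_set[of "transpose_mat M" n] by auto
  then have "S \<subseteq> {..<n}" unfolding closed_index_set_def by blast
  with S have "{..<n} - S \<noteq> {}" "{..<n} - S \<noteq> {..<n}" by auto
  moreover have "closed_index_set n M ({..<n} - S)"
    using closed_index_set_transpose[OF _ S(1)] M by simp
  ultimately show ?thesis
    using M reducible_iff_closed_index_set by blast
qed

lemma irreducible_mat_transpose:
  assumes "M \<in> carrier_mat n n"
  shows "irreducible_mat n (transpose_mat M) \<longleftrightarrow> irreducible_mat n M"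
  using assms reducible_of_reducible_transpose[OF assms] reducible_of_reducible_transpose[of "transpose_mat M" n]
  unfolding irreducible_mat_def by auto

section \<open>Perron vectors of irreducible nonnegative matrices\<close>

definition pos_support :: "real vec \<Rightarrow> nat set" where
  "pos_support x = {i. i < dim_vec x \<and> 0 < x $ i}"

lemma one_plus_mult_vec_index:
  fixes T :: "real mat"
  assumes "T \<in> carrier_mat n n" "x \<in> carrier_vec n" "i < n"
  shows "((1\<^sub>m n + T) *\<^sub>v x) $ i = x $ i + (T *\<^sub>v x) $ i"
proof -
  have "(1\<^sub>m n + T) *\<^sub>v x = x + T *\<^sub>v x"
    using assms(1,2) by (simp add: add_mult_distrib_mat_vec[of _ n n] one_mult_mat_vec[OF assms(2)])
  then show ?thesis using assms by simp
qed

lemma one_plus_mult_vec_nonneg: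
  assumes T: "T \<in> carrier_mat n n" "nonneg_mat n T" and x: "0\<^sub>v n \<le> x"
  shows "0\<^sub>v n \<le> (1\<^sub>m n + T) *\<^sub>v x"
proof -
  have "x \<in> carrier_vec n" using x by (simp add: less_eq_vec_iff[of _ n])
  then show ?thesis
    using mult_mat_vec_nonneg[OF T x] x T(1) mult_mat_vec_carrier[of "1\<^sub>m n + T" n n x]
    by (auto simp: less_eq_vec_iff[of _ n] one_plus_mult_vec_index simp del: index_mult_mat_vec)
qed

lemma pos_support_one_plus_mult_vec:
  assumes T: "T \<in> carrier_mat n n" "nonneg_mat n T" and x: "0\<^sub>v n \<le> x"
  shows "pos_support x \<subseteq> pos_support ((1\<^sub>m n + T) *\<^sub>v x)"
proof -
  have "x \<in> carrier_vec n" using x by (simp add: less_eq_vec_iff[of _ n])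
  then show ?thesis
    using mult_mat_vec_nonneg[OF T x] T(1)
    by (auto simp: pos_support_def less_eq_vec_iff[of _ n] one_plus_mult_vec_index
        simp del: index_mult_mat_vec)
qed

lemma pos_support_one_plus_mult_vec_grows:
  assumes T: "T \<in> carrier_mat n n" "nonneg_mat n T" "irreducible_mat n T" and x: "0\<^sub>v n \<le> x"
    and ne: "pos_support x \<noteq> {}" and proper: "pos_support x \<noteq> {..<n}"
  shows "pos_support x \<subset> pos_support ((1\<^sub>m n + T) *\<^sub>v x)"
proof -
  have xc: "x \<in> carrier_vec n" and x_nonneg: "\<And>j. j < n \<Longrightarrow> 0 \<le> x $ j"
    using x by (auto simp: less_eq_vec_iff[of _ n])
  have "pos_support x \<subseteq> {..<n}" using xc by (auto simp: pos_support_def)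
  then obtain a b where a: "a < n" "a \<notin> pos_support x" and b: "b \<in> pos_support x"
    and Tab: "T $$ (a, b) \<noteq> 0"
    using irreducible_mat_exit[OF T(3) _ ne proper] by blast
  have bn: "b < n" "0 < x $ b" using b xc by (auto simp: pos_support_def)
  have "0 < T $$ (a, b) * x $ b"
    using nonneg_matD[OF T(2) a(1) bn(1)] Tab bn(2) by simp
  also have "\<dots> \<le> (\<Sum>j<n. T $$ (a, j) * x $ j)"
    using bn(1) nonneg_matD[OF T(2) a(1)] x_nonneg
    by (intro member_le_sum) (auto intro: mult_nonneg_nonneg)
  also have "\<dots> = (T *\<^sub>v x) $ a"
    using T(1) xc a(1) by (simp add: mult_mat_vec_index_sum del: index_mult_mat_vec)
  finally have "a \<in> pos_support ((1\<^sub>m n + T) *\<^sub>v x)"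
    using T(1) xc a(1) x_nonneg[OF a(1)]
    by (simp add: pos_support_def one_plus_mult_vec_index del: index_mult_mat_vec)
  then show ?thesis
    using pos_support_one_plus_mult_vec[OF T(1,2) x] a(2) by blast
qed

lemma card_pos_support_one_plus_pow:
  assumes T: "T \<in> carrier_mat n n" "nonneg_mat n T" "irreducible_mat n T"
    and x: "0\<^sub>v n \<le> x" "pos_support x \<noteq> {}"
  shows "min n (card (pos_support x) + k) \<le> card (pos_support ((1\<^sub>m n + T) ^\<^sub>m k *\<^sub>v x))"
  using x
proof (induction k arbitrary: x)
  case 0
  then have "x \<in> carrier_vec n" by (simp add: less_eq_vec_iff[of _ n])
  then show ?case using T(1) by simp
next
  case (Suc k)
  let ?A = "1\<^sub>m n + T"
  have A: "?A \<in> carrier_mat n n" using T(1) by simp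
  have xc: "x \<in> carrier_vec n" using Suc.prems by (simp add: less_eq_vec_iff[of _ n])
  have Ax: "0\<^sub>v n \<le> ?A *\<^sub>v x"
    using one_plus_mult_vec_nonneg[OF T(1,2) Suc.prems(1)] .
  have sub: "pos_support y \<subseteq> {..<n}" if "y \<in> carrier_vec n" for y
    using that by (auto simp: pos_support_def)
  have "min n (card (pos_support x) + 1) \<le> card (pos_support (?A *\<^sub>v x))"
  proof (cases "pos_support x = {..<n}")
    case True
    then have "pos_support (?A *\<^sub>v x) = {..<n}"
      using pos_support_one_plus_mult_vec[OF T(1,2) Suc.prems(1)] sub[OF mult_mat_vec_carrier[OF A xc]]
      by blast
    then show ?thesis by simp
  next
    case False
    have "card (pos_support x) < card (pos_support (?A *\<^sub>v x))"
      using pos_support_one_plus_mult_vec_grows[OF T Suc.prems False]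
        finite_subset[OF sub[OF mult_mat_vec_carrier[OF A xc]]]
      by (intro psubset_card_mono) auto
    then show ?thesis by simp
  qed
  moreover have "pos_support (?A *\<^sub>v x) \<noteq> {}"
    using pos_support_one_plus_mult_vec[OF T(1,2) Suc.prems(1)] Suc.prems(2) by blast
  ultimately have "min n (card (pos_support x) + Suc k) \<le> card (pos_support (?A ^\<^sub>m k *\<^sub>v (?A *\<^sub>v x)))"
    using Suc.IH[OF Ax] by linarith
  also have "?A ^\<^sub>m k *\<^sub>v (?A *\<^sub>v x) = ?A ^\<^sub>m Suc k *\<^sub>v x"
    using assoc_mult_mat_vec[OF pow_carrier_mat[OF A] A xc, of k] by simp
  finally show ?case .
qed

lemma irreducible_one_plus_pow_positive:
  assumes T: "T \<in> carrier_mat n n" "nonneg_mat n T" "irreducible_mat n T"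
    and x: "0\<^sub>v n \<le> x" "x \<noteq> 0\<^sub>v n" and i: "i < n"
  shows "0 < ((1\<^sub>m n + T) ^\<^sub>m (n - 1) *\<^sub>v x) $ i"
proof -
  let ?y = "(1\<^sub>m n + T) ^\<^sub>m (n - 1) *\<^sub>v x"
  obtain j where "j < n" "0 < x $ j"
    using nonneg_nonzero_vec_pos_entry[OF x] .
  moreover have xc: "x \<in> carrier_vec n"
    using x(1) by (simp add: less_eq_vec_iff[of _ n])
  ultimately have jx: "j \<in> pos_support x"
    by (simp add: pos_support_def)
  then have ne: "pos_support x \<noteq> {}" by blast
  have "pos_support x \<subseteq> {..<n}"
    using xc by (auto simp: pos_support_def)
  then have "finite (pos_support x)"
    by (rule finite_subset) simp
  then have "1 \<le> card (pos_support x)"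
    using ne by (simp add: Suc_le_eq card_gt_0_iff)
  then have card: "card {..<n} \<le> card (pos_support ?y)"
    using card_pos_support_one_plus_pow[OF T x(1) ne, of "n - 1"] by simp
  have sub: "pos_support ?y \<subseteq> {..<n}"
    using T(1) by (auto simp: pos_support_def)
  have "pos_support ?y = {..<n}"
    by (rule card_seteq[OF finite_lessThan sub card])
  with i have "i \<in> pos_support ?y" by simp
  then show ?thesis unfolding pos_support_def by blast
qed

lemma pow_mat_commute:
  fixes A T :: "'a :: semiring_1 mat"
  assumes A: "A \<in> carrier_mat n n" and T: "T \<in> carrier_mat n n" and comm: "A * T = T * A"
  shows "A ^\<^sub>m k * T = T * A ^\<^sub>m k"
proof (induction k)
  case 0
  show ?case using A T by simp
next
  case (Suc k)
  have Ak: "A ^\<^sub>m k \<in> carrier_mat n n" using A by simp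
  have "A ^\<^sub>m Suc k * T = A ^\<^sub>m k * (A * T)"
    using assoc_mult_mat[OF Ak A T] by simp
  also have "\<dots> = (A ^\<^sub>m k * T) * A"
    using assoc_mult_mat[OF Ak T A] by (simp add: comm)
  also have "\<dots> = T * A ^\<^sub>m Suc k"
    using assoc_mult_mat[OF T Ak A] by (simp add: Suc.IH)
  finally show ?case .
qed

lemma one_plus_mat_commute:
  fixes T :: "'a :: semiring_1 mat"
  assumes "T \<in> carrier_mat n n"
  shows "(1\<^sub>m n + T) * T = T * (1\<^sub>m n + T)"
proof -
  have "(1\<^sub>m n + T) * T = T + T * T"
    using add_mult_distrib_mat[OF one_carrier_mat assms assms] left_mult_one_mat[OF assms] by simp
  also have "\<dots> = T * (1\<^sub>m n + T)"
    using mult_add_distrib_mat[OF assms one_carrier_mat assms] right_mult_one_mat[OF assms] by simp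
  finally show ?thesis .
qed

lemma one_plus_pow_mult_vec_commute:
  fixes T :: "real mat"
  assumes T: "T \<in> carrier_mat n n" and z: "z \<in> carrier_vec n"
  shows "T *\<^sub>v ((1\<^sub>m n + T) ^\<^sub>m k *\<^sub>v z) = (1\<^sub>m n + T) ^\<^sub>m k *\<^sub>v (T *\<^sub>v z)"
proof -
  have A: "1\<^sub>m n + T \<in> carrier_mat n n" "(1\<^sub>m n + T) ^\<^sub>m k \<in> carrier_mat n n" using T by auto
  have "T *\<^sub>v ((1\<^sub>m n + T) ^\<^sub>m k *\<^sub>v z) = (T * (1\<^sub>m n + T) ^\<^sub>m k) *\<^sub>v z"
    using assoc_mult_mat_vec[OF T A(2) z] by simp
  also have "\<dots> = ((1\<^sub>m n + T) ^\<^sub>m k * T) *\<^sub>v z"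
    using pow_mat_commute[OF A(1) T one_plus_mat_commute[OF T]] by simp
  finally show ?thesis
    using assoc_mult_mat_vec[OF A(2) T z] by simp
qed

lemma irreducible_subinvariant_vector_is_eigenvector:
  assumes T: "T \<in> carrier_mat n n" "nonneg_mat n T" "irreducible_mat n T"
    and z: "z \<in> carrier_vec n" "0\<^sub>v n \<le> z" "z \<noteq> 0\<^sub>v n"
    and sub: "r \<cdot>\<^sub>v z \<le> T *\<^sub>v z" and r: "rho T \<le> r"
  shows "T *\<^sub>v z = r \<cdot>\<^sub>v z"
proof (rule ccontr)
  assume ne: "T *\<^sub>v z \<noteq> r \<cdot>\<^sub>v z"
  let ?P = "(1\<^sub>m n + T) ^\<^sub>m (n - 1)"
  have P: "?P \<in> carrier_mat n n" using T(1) by simp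
  obtain i0 where "i0 < n" using nonneg_nonzero_vec_pos_entry[OF z(2,3)] by blast
  then have n: "0 < n" by simp
  define w where "w = T *\<^sub>v z - r \<cdot>\<^sub>v z"
  have w_index: "w $ i = (T *\<^sub>v z) $ i - r * z $ i" if "i < n" for i
    using T(1) z(1) that unfolding w_def by (simp del: index_mult_mat_vec)
  have w_nonzero: "w \<noteq> 0\<^sub>v n"
  proof
    assume "w = 0\<^sub>v n"
    then have "(T *\<^sub>v z) $ i = (r \<cdot>\<^sub>v z) $ i" if "i < n" for i
      using w_index[OF that] that z(1) by simp
    then have "T *\<^sub>v z = r \<cdot>\<^sub>v z"
      using T(1) z(1) by (intro eq_vecI) auto
    with ne show False ..
  qed
  have w: "w \<in> carrier_vec n" "0\<^sub>v n \<le> w" "w \<noteq> 0\<^sub>v n"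
    using sub T(1) z(1) w_nonzero w_index unfolding w_def
    by (auto simp: less_eq_vec_iff[of _ n] simp del: index_mult_mat_vec)
  \<comment> \<open>\<open>(I + T)\<^sup>n\<^sup>-\<^sup>1\<close> commutes with \<open>T\<close> and makes \<open>z\<close> and \<open>w\<close> positive, so \<open>u\<close> is strictly subinvariant\<close>
  define u where "u = ?P *\<^sub>v z"
  have u: "u \<in> carrier_vec n" "\<And>i. i < n \<Longrightarrow> 0 < u $ i"
    unfolding u_def using mult_mat_vec_carrier[OF P z(1)] irreducible_one_plus_pow_positive[OF T z(2,3)]
    by auto
  have diff: "T *\<^sub>v u - r \<cdot>\<^sub>v u = ?P *\<^sub>v w"
    unfolding u_def w_def one_plus_pow_mult_vec_commute[OF T(1) z(1)] mult_mat_vec[OF P z(1), symmetric]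
    using P T(1) z(1) by (simp add: mult_minus_distrib_mat_vec[of _ n n])
  have "r * u $ i < (T *\<^sub>v u) $ i" if "i < n" for i
  proof -
    have "0 < (T *\<^sub>v u - r \<cdot>\<^sub>v u) $ i"
      using irreducible_one_plus_pow_positive[OF T w(2,3) that] by (simp only: diff)
    then show ?thesis using that u(1) T(1) by (simp del: index_mult_mat_vec)
  qed
  then have "r < rho T"
    using less_rho_if_strictly_subinvariant[OF T(1,2) n u] by blast
  with r show False by simp
qed

lemma irreducible_nonneg_eigenvector_positive:
  assumes T: "T \<in> carrier_mat n n" "nonneg_mat n T" "irreducible_mat n T"
    and z: "z \<in> carrier_vec n" "0\<^sub>v n \<le> z" "z \<noteq> 0\<^sub>v n"
    and eig: "T *\<^sub>v z = r \<cdot>\<^sub>v z" and r: "0 \<le> r" and i: "i < n"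
  shows "0 < z $ i"
proof -
  let ?A = "1\<^sub>m n + T" and ?m = "n - 1"
  have "eigenvector ?A z (1 + r)"
    using eig T(1) z(1,3) unfolding eigenvector_def
    by (simp add: add_mult_distrib_mat_vec[of _ n n] one_mult_mat_vec[OF z(1)] add_smult_distrib_vec)
  moreover have "?A \<in> carrier_mat n n" using T(1) by simp
  ultimately have "?A ^\<^sub>m ?m *\<^sub>v z = (1 + r) ^ ?m \<cdot>\<^sub>v z"
    using eigenvector_pow by blast
  then have "0 < (1 + r) ^ ?m * z $ i"
    using irreducible_one_plus_pow_positive[OF T z(2,3) i] z(1) i by simp
  moreover have "0 < (1 + r) ^ ?m" using r by simp
  ultimately show ?thesis using zero_less_mult_pos by blast
qed

lemma perron_vector:
  assumes T: "T \<in> carrier_mat n n" "nonneg_mat n T" "irreducible_mat n T" and n: "0 < n"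
  obtains z where "z \<in> carrier_vec n" "\<And>i. i < n \<Longrightarrow> 0 < z $ i" "T *\<^sub>v z = rho T \<cdot>\<^sub>v z"
proof -
  obtain z where z: "z \<in> carrier_vec n" "0\<^sub>v n \<le> z" "z \<noteq> 0\<^sub>v n" "rho T \<cdot>\<^sub>v z \<le> T *\<^sub>v z"
    using rho_subinvariant_vector[OF T(1,2) n] .
  have "T *\<^sub>v z = rho T \<cdot>\<^sub>v z"
    using irreducible_subinvariant_vector_is_eigenvector[OF T z order_refl] .
  with irreducible_nonneg_eigenvector_positive[OF T z(1-3) _ rho_nonneg[OF T(1) n]] z(1)
  show ?thesis using that by blast
qed

lemma rho_plus_smult_one_minus_diag_vec_less:
  assumes B: "B \<in> carrier_mat n n" "nonneg_mat n B" "irreducible_mat n B"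
    and d: "d \<in> carrier_vec n" "0\<^sub>v n \<le> d" "d \<noteq> 0\<^sub>v n"
    and C_nonneg: "nonneg_mat n (B + (c \<cdot>\<^sub>m 1\<^sub>m n - diag_vec d))"
  shows "rho (B + (c \<cdot>\<^sub>m 1\<^sub>m n - diag_vec d)) < rho B + c"
proof (rule ccontr)
  let ?C = "B + (c \<cdot>\<^sub>m 1\<^sub>m n - diag_vec d)"
  assume "\<not> rho ?C < rho B + c"
  have C: "?C \<in> carrier_mat n n" using B(1) diag_vec_carrier[OF d(1)] by auto
  obtain i0 where i0: "i0 < n" "0 < d $ i0"
    using nonneg_nonzero_vec_pos_entry[OF d(2,3)] .
  then have n: "0 < n" by simp
  have d_nonneg: "\<And>i. i < n \<Longrightarrow> 0 \<le> d $ i"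
    using d by (auto simp: less_eq_vec_iff[of _ n])
  obtain y where y: "y \<in> carrier_vec n" "0\<^sub>v n \<le> y" "y \<noteq> 0\<^sub>v n" "rho ?C \<cdot>\<^sub>v y \<le> ?C *\<^sub>v y"
    using rho_subinvariant_vector[OF C C_nonneg n] .
  have y_nonneg: "\<And>i. i < n \<Longrightarrow> 0 \<le> y $ i"
    using y(2) by (auto simp: less_eq_vec_iff[of _ n])
  have Cy: "(?C *\<^sub>v y) $ i = (B *\<^sub>v y) $ i + (c - d $ i) * y $ i" if i: "i < n" for i
  proof -
    have "(?C *\<^sub>v y) $ i = (\<Sum>j<n. ?C $$ (i, j) * y $ j)"
      by (rule mult_mat_vec_index_sum[OF C y(1) i])
    also have "\<dots> = (\<Sum>j<n. B $$ (i, j) * y $ j + (if i = j then (c - d $ i) * y $ j else 0))"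
      using B(1) d(1) i by (intro sum.cong) (auto simp: plus_smult_one_minus_diag_vec_index distrib_right)
    also have "\<dots> = (B *\<^sub>v y) $ i + (c - d $ i) * y $ i"
      using B(1) y(1) i by (simp add: sum.distrib mult_mat_vec_index_sum del: index_mult_mat_vec)
    finally show ?thesis .
  qed
  have key: "rho B * y $ i + d $ i * y $ i \<le> (B *\<^sub>v y) $ i" if i: "i < n" for i
  proof -
    have "(rho B + c) * y $ i \<le> rho ?C * y $ i"
      using \<open>\<not> rho ?C < rho B + c\<close> y_nonneg[OF i] by (simp add: mult_right_mono)
    also have "\<dots> \<le> (?C *\<^sub>v y) $ i"
      using y(1,4) C i by (auto simp: less_eq_vec_iff[of _ n] simp del: index_mult_mat_vec)
    finally show ?thesis using Cy[OF i] by (simp add: algebra_simps)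
  qed
  have "rho B * y $ i \<le> (B *\<^sub>v y) $ i" if i: "i < n" for i
    using key[OF i] mult_nonneg_nonneg[OF d_nonneg[OF i] y_nonneg[OF i]] by linarith
  then have "rho B \<cdot>\<^sub>v y \<le> B *\<^sub>v y"
    using y(1) B(1) by (subst less_eq_vec_iff[of _ n]) (auto simp del: index_mult_mat_vec)
  then have By: "B *\<^sub>v y = rho B \<cdot>\<^sub>v y"
    using irreducible_subinvariant_vector_is_eigenvector[OF B y(1-3)] by simp
  have "0 < y $ i0"
    using irreducible_nonneg_eigenvector_positive[OF B y(1-3) By rho_nonneg[OF B(1) n] i0(1)] .
  moreover have "d $ i0 * y $ i0 \<le> 0"
    using key[OF i0(1)] By y(1) i0(1) by simp
  ultimately show False using i0(2) by (simp add: mult_le_0_iff)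
qed

section \<open>M-matrices\<close>

definition Z_matrix :: "nat \<Rightarrow> real mat \<Rightarrow> bool" where
  "Z_matrix n M \<longleftrightarrow> (\<forall>i<n. \<forall>j<n. i \<noteq> j \<longrightarrow> M $$ (i, j) \<le> 0)"

lemma plus_diag_vec_index:
  assumes "M \<in> carrier_mat n n" "d \<in> carrier_vec n" "i < n" "j < n"
  shows "(M + diag_vec d) $$ (i, j) = M $$ (i, j) + (if i = j then d $ i else 0)"
  using assms unfolding diag_vec_def by auto

lemma Z_matrix_plus_diag_vec:
  assumes "M \<in> carrier_mat n n" "d \<in> carrier_vec n"
  shows "Z_matrix n (M + diag_vec d) \<longleftrightarrow> Z_matrix n M"
  using assms by (simp add: Z_matrix_def plus_diag_vec_index)

lemma nonsingular_M_matrix_Z_matrix: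
  assumes "nonsingular_M_matrix n N"
  shows "Z_matrix n N"
proof -
  obtain s B where B: "B \<in> carrier_mat n n" "nonneg_mat n B" and N: "N = s \<cdot>\<^sub>m 1\<^sub>m n - B"
    using assms unfolding nonsingular_M_matrix_def by blast
  show ?thesis
    unfolding Z_matrix_def N using B nonneg_matD[OF B(2)] by auto
qed

lemma Z_matrix_if_diagonal_perturbations_nonsingular:
  assumes M: "M \<in> carrier_mat n n" and n: "0 < n"
    and pert: "\<And>d. d \<in> carrier_vec n \<Longrightarrow> 0\<^sub>v n \<le> d \<Longrightarrow> d \<noteq> 0\<^sub>v n \<Longrightarrow>
      nonsingular_M_matrix n (M + diag_vec d)"
  shows "Z_matrix n M"
proof -
  have "unit_vec n 0 \<in> carrier_vec n" "0\<^sub>v n \<le> (unit_vec n 0 :: real vec)" "(unit_vec n 0 :: real vec) \<noteq> 0\<^sub>v n"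
    using n by (auto simp: less_eq_vec_iff[of _ n] unit_vec_nonzero)
  then show ?thesis
    using nonsingular_M_matrix_Z_matrix[OF pert] Z_matrix_plus_diag_vec[OF M] by blast
qed

lemma transpose_smult_one_minus:
  assumes "B \<in> carrier_mat n n"
  shows "transpose_mat (s \<cdot>\<^sub>m 1\<^sub>m n - B) = s \<cdot>\<^sub>m 1\<^sub>m n - transpose_mat B"
  using assms by (intro eq_matI) auto

lemma smult_one_minus_mult_vec:
  fixes B :: "real mat"
  assumes "B \<in> carrier_mat n n" and "x \<in> carrier_vec n"
  shows "(s \<cdot>\<^sub>m 1\<^sub>m n - B) *\<^sub>v x = s \<cdot>\<^sub>v x - B *\<^sub>v x"
  using assms smult_mat_mult_vec[OF one_carrier_mat assms(2), of s]
  by (simp add: minus_mult_distrib_mat_vec[of _ n n])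

lemma irreducible_mat_smult_one_minus:
  assumes "B \<in> carrier_mat n n"
  shows "irreducible_mat n (s \<cdot>\<^sub>m 1\<^sub>m n - B) \<longleftrightarrow> irreducible_mat n B"
  using assms by (intro irreducible_mat_cong_offdiag) auto

lemma nonsingular_M_matrix_no_nonneg_left_subsolution:
  assumes N: "nonsingular_M_matrix n N"
    and w: "w \<in> carrier_vec n" "0\<^sub>v n \<le> w" "w \<noteq> 0\<^sub>v n"
  shows "\<not> transpose_mat N *\<^sub>v w \<le> 0\<^sub>v n"
proof
  assume le: "transpose_mat N *\<^sub>v w \<le> 0\<^sub>v n"
  obtain s B where B: "B \<in> carrier_mat n n" "nonneg_mat n B" and NB: "N = s \<cdot>\<^sub>m 1\<^sub>m n - B"
    and lt: "rho B < s"
    using N unfolding nonsingular_M_matrix_def by blast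
  have BT: "transpose_mat B \<in> carrier_mat n n" "nonneg_mat n (transpose_mat B)"
    using B nonneg_mat_transpose by auto
  have "transpose_mat N *\<^sub>v w = s \<cdot>\<^sub>v w - transpose_mat B *\<^sub>v w"
    unfolding NB transpose_smult_one_minus[OF B(1)] by (rule smult_one_minus_mult_vec[OF BT(1) w(1)])
  then have "(transpose_mat N *\<^sub>v w) $ i = s * w $ i - (transpose_mat B *\<^sub>v w) $ i" if "i < n" for i
    using B(1) w(1) that by (simp del: index_mult_mat_vec)
  moreover have "(transpose_mat N *\<^sub>v w) $ i \<le> 0" if "i < n" for i
    using le that unfolding less_eq_vec_def by (simp del: index_mult_mat_vec)
  ultimately have "s \<cdot>\<^sub>v w \<le> transpose_mat B *\<^sub>v w"
    using w(1) B(1) by (auto simp: less_eq_vec_iff[of _ n] simp del: index_mult_mat_vec)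
  then have "s \<le> rho (transpose_mat B)"
    by (rule le_rho_if_subinvariant[OF BT w])
  with lt show False using rho_transpose[OF B(1)] by simp
qed

lemma singular_M_matrix_if_positive_left_null_vector:
  assumes M: "M \<in> carrier_mat n n" "Z_matrix n M" and n: "0 < n"
    and v: "v \<in> carrier_vec n" "\<And>i. i < n \<Longrightarrow> 0 < v $ i" and null: "transpose_mat M *\<^sub>v v = 0\<^sub>v n"
  shows "singular_M_matrix n M"
proof -
  define s where "s = (\<Sum>i<n. \<bar>M $$ (i, i)\<bar>)"
  define B where "B = s \<cdot>\<^sub>m 1\<^sub>m n - M"
  have B: "B \<in> carrier_mat n n" unfolding B_def using M(1) by (rule minus_carrier_mat)
  have "nonneg_mat n B"
    unfolding nonneg_mat_def
  proof (intro allI impI)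
    fix i j assume ij: "i < n" "j < n"
    have "\<bar>M $$ (i, i)\<bar> \<le> s"
      unfolding s_def using ij by (intro member_le_sum) auto
    then show "0 \<le> B $$ (i, j)"
      using M ij unfolding B_def Z_matrix_def by (cases "i = j") auto
  qed
  then have BT: "transpose_mat B \<in> carrier_mat n n" "nonneg_mat n (transpose_mat B)"
    using B nonneg_mat_transpose by auto
  have MB: "M = s \<cdot>\<^sub>m 1\<^sub>m n - B"
    unfolding B_def using M(1) by (intro eq_matI) auto
  have "transpose_mat B *\<^sub>v v = s \<cdot>\<^sub>v v - transpose_mat M *\<^sub>v v"
    unfolding B_def transpose_smult_one_minus[OF M(1)]
    by (rule smult_one_minus_mult_vec) (use M(1) v(1) in auto)
  then have eig: "transpose_mat B *\<^sub>v v = s \<cdot>\<^sub>v v"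
    using null v(1) by simp
  have v_nonneg: "0\<^sub>v n \<le> v" and v_nonzero: "v \<noteq> 0\<^sub>v n"
    using v n by (auto simp: less_eq_vec_iff[of _ n] intro: less_imp_le)
  have "s \<le> rho (transpose_mat B)"
    using le_rho_if_subinvariant[OF BT v(1) v_nonneg v_nonzero] eig by simp
  moreover have "rho (transpose_mat B) \<le> s"
    using rho_le_if_positive_superinvariant[OF BT n v] eig by simp
  ultimately have "s = rho B" using rho_transpose[OF B] by simp
  then show ?thesis
    unfolding singular_M_matrix_def using M(1) B \<open>nonneg_mat n B\<close> MB by blast
qed

lemma irreducible_singular_M_matrix_left_null_vector:
  assumes M: "singular_M_matrix n M" "irreducible_mat n M" and n: "0 < n"
  obtains v where "v \<in> carrier_vec n" "\<And>i. i < n \<Longrightarrow> 0 < v $ i" "transpose_mat M *\<^sub>v v = 0\<^sub>v n"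
proof -
  obtain s B where B: "B \<in> carrier_mat n n" "nonneg_mat n B" and MB: "M = s \<cdot>\<^sub>m 1\<^sub>m n - B"
    and s: "s = rho B"
    using M(1) unfolding singular_M_matrix_def by blast
  have BT: "transpose_mat B \<in> carrier_mat n n" "nonneg_mat n (transpose_mat B)"
    "irreducible_mat n (transpose_mat B)"
    using B M(2) nonneg_mat_transpose irreducible_mat_transpose[OF B(1)]
      irreducible_mat_smult_one_minus[OF B(1)] unfolding MB by auto
  obtain v where v: "v \<in> carrier_vec n" "\<And>i. i < n \<Longrightarrow> 0 < v $ i"
    and eig: "transpose_mat B *\<^sub>v v = s \<cdot>\<^sub>v v"
    using perron_vector[OF BT n] rho_transpose[OF B(1)] s by metis
  have "transpose_mat M *\<^sub>v v = 0\<^sub>v n"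
    unfolding MB transpose_smult_one_minus[OF B(1)] smult_one_minus_mult_vec[OF BT(1) v(1)] eig
    using v(1) by simp
  with v that show ?thesis by blast
qed

lemma irreducible_singular_M_matrix_plus_diag_nonsingular:
  assumes M: "singular_M_matrix n M" "irreducible_mat n M"
    and d: "d \<in> carrier_vec n" "0\<^sub>v n \<le> d" "d \<noteq> 0\<^sub>v n"
  shows "nonsingular_M_matrix n (M + diag_vec d)"
proof -
  obtain s B where B: "B \<in> carrier_mat n n" "nonneg_mat n B" and MB: "M = s \<cdot>\<^sub>m 1\<^sub>m n - B"
    and s: "s = rho B"
    using M(1) unfolding singular_M_matrix_def by blast
  have B_irr: "irreducible_mat n B"
    using M(2) irreducible_mat_smult_one_minus[OF B(1)] unfolding MB by simp
  define c where "c = (\<Sum>i<n. d $ i)"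
  have d_le_c: "d $ i \<le> c" if "i < n" for i
    unfolding c_def using that d by (intro member_le_sum) (auto simp: less_eq_vec_iff[of _ n])
  define C where "C = B + (c \<cdot>\<^sub>m 1\<^sub>m n - diag_vec d)"
  have C: "C \<in> carrier_mat n n"
    unfolding C_def using B(1) diag_vec_carrier[OF d(1)] by auto
  have C_index: "C $$ (i, j) = B $$ (i, j) + (if i = j then c - d $ i else 0)"
    if "i < n" "j < n" for i j
    unfolding C_def using B(1) d(1) that by (rule plus_smult_one_minus_diag_vec_index)
  have C_nonneg: "nonneg_mat n C"
    unfolding nonneg_mat_def using C_index nonneg_matD[OF B(2)] d_le_c by auto
  have "M + diag_vec d = (s + c) \<cdot>\<^sub>m 1\<^sub>m n - C"
    unfolding MB using B(1) C d(1) C_index by (intro eq_matI) (auto simp: diag_vec_def)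
  moreover have "rho C < s + c"
    using rho_plus_smult_one_minus_diag_vec_less[OF B B_irr d C_nonneg[unfolded C_def]] s
    unfolding C_def by simp
  ultimately show ?thesis
    unfolding nonsingular_M_matrix_def using C C_nonneg B(1) d(1)
    by (intro conjI exI[of _ "s + c"] exI[of _ C]) (auto simp: MB intro!: add_carrier_mat diag_vec_carrier)
qed

lemma Z_matrix_closed_index_set_left_subsolution:
  assumes M: "M \<in> carrier_mat n n" "Z_matrix n M" and S: "closed_index_set n M S"
    and v: "v \<in> carrier_vec n" "\<And>i. i < n \<Longrightarrow> 0 < v $ i" and null: "transpose_mat M *\<^sub>v v = 0\<^sub>v n"
  shows "transpose_mat (M + diag_vec (vec n (\<lambda>i. if i \<in> S then 0 else 1)))
      *\<^sub>v vec n (\<lambda>i. if i \<in> S then v $ i else 0) \<le> 0\<^sub>v n"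
proof -
  define d :: "real vec" where "d = vec n (\<lambda>i. if i \<in> S then 0 else 1)"
  define w where "w = vec n (\<lambda>i. if i \<in> S then v $ i else 0)"
  let ?N = "M + diag_vec d"
  have N: "?N \<in> carrier_mat n n" using M(1) diag_vec_carrier[of d n] by (simp add: d_def)
  have w: "w \<in> carrier_vec n" by (simp add: w_def)
  have "(transpose_mat ?N *\<^sub>v w) $ b \<le> 0" if b: "b < n" for b
  proof -
    have "(transpose_mat ?N *\<^sub>v w) $ b = (\<Sum>a<n. transpose_mat ?N $$ (b, a) * w $ a)"
      using N w b by (intro mult_mat_vec_index_sum) auto
    also have "\<dots> = (\<Sum>a<n. ?N $$ (a, b) * w $ a)"
      using carrier_matD[OF N] b by (intro sum.cong) auto
    also have "\<dots> = (\<Sum>a<n. M $$ (a, b) * w $ a)"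
      \<comment> \<open>\<open>d\<close> vanishes on \<open>S\<close> and \<open>w\<close> vanishes off \<open>S\<close>\<close>
      using M(1) b by (intro sum.cong) (auto simp: plus_diag_vec_index d_def w_def)
    also have "\<dots> \<le> 0"
    proof (cases "b \<in> S")
      case True
      have "(\<Sum>a<n. M $$ (a, b) * w $ a) = (\<Sum>a<n. M $$ (a, b) * v $ a)"
        using S True by (intro sum.cong) (auto simp: w_def closed_index_set_def)
      also have "\<dots> = (transpose_mat M *\<^sub>v v) $ b"
        using M(1) v(1) b by (simp add: mult_mat_vec_index_sum[of _ n] del: index_mult_mat_vec)
      finally show ?thesis using null b by simp
    next
      case False
      have "M $$ (a, b) * w $ a \<le> 0" if a: "a < n" for a
      proof (cases "a \<in> S")
        case True
        with \<open>b \<notin> S\<close> have "M $$ (a, b) \<le> 0"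
          using M(2) a b unfolding Z_matrix_def by metis
        then show ?thesis
          using True a v(2)[OF a] by (simp add: w_def mult_nonpos_nonneg)
      qed (use a in \<open>simp add: w_def\<close>)
      then show ?thesis by (intro sum_nonpos) auto
    qed
    finally show ?thesis .
  qed
  then show ?thesis
    using carrier_matD[OF N] unfolding d_def[symmetric] w_def[symmetric]
    by (simp add: less_eq_vec_def del: index_mult_mat_vec)
qed

lemma irreducible_if_diagonal_perturbations_nonsingular:
  assumes M: "M \<in> carrier_mat n n" "Z_matrix n M"
    and v: "v \<in> carrier_vec n" "\<And>i. i < n \<Longrightarrow> 0 < v $ i" and null: "transpose_mat M *\<^sub>v v = 0\<^sub>v n"
    and pert: "\<And>d. d \<in> carrier_vec n \<Longrightarrow> 0\<^sub>v n \<le> d \<Longrightarrow> d \<noteq> 0\<^sub>v n \<Longrightarrow>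
      nonsingular_M_matrix n (M + diag_vec d)"
  shows "irreducible_mat n M"
proof -
  have "\<not> reducible n M"
  proof
    assume "reducible n M"
    then obtain S where S: "closed_index_set n M S" "S \<noteq> {}" "S \<noteq> {..<n}"
      using reducible_iff_closed_index_set[OF M(1)] by blast
    then have S_sub: "S \<subseteq> {..<n}" unfolding closed_index_set_def by blast
    obtain a0 where a0: "a0 < n" "a0 \<notin> S" using S_sub S(3) by blast
    obtain b0 where b0: "b0 < n" "b0 \<in> S" using S_sub S(2) by blast
    define d :: "real vec" where "d = vec n (\<lambda>i. if i \<in> S then 0 else 1)"
    define w where "w = vec n (\<lambda>i. if i \<in> S then v $ i else 0)"
    have d: "d \<in> carrier_vec n" "0\<^sub>v n \<le> d" "d \<noteq> 0\<^sub>v n"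
    proof -
      show "d \<in> carrier_vec n" "0\<^sub>v n \<le> d" unfolding d_def by (auto simp: less_eq_vec_iff[of _ n])
      have "d $ a0 \<noteq> 0\<^sub>v n $ a0" using a0 by (simp add: d_def)
      then show "d \<noteq> 0\<^sub>v n" by metis
    qed
    have w: "w \<in> carrier_vec n" "0\<^sub>v n \<le> w" "w \<noteq> 0\<^sub>v n"
    proof -
      show "w \<in> carrier_vec n" "0\<^sub>v n \<le> w"
        unfolding w_def using v(2) by (auto simp: less_eq_vec_iff[of _ n] intro: less_imp_le)
      have "w $ b0 \<noteq> 0\<^sub>v n $ b0" using b0 v(2)[OF b0(1)] by (simp add: w_def)
      then show "w \<noteq> 0\<^sub>v n" by metis
    qed
    have "transpose_mat (M + diag_vec d) *\<^sub>v w \<le> 0\<^sub>v n"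
      unfolding d_def w_def by (rule Z_matrix_closed_index_set_left_subsolution[OF M S(1) v null])
    with nonsingular_M_matrix_no_nonneg_left_subsolution[OF pert[OF d] w] show False ..
  qed
  with M(1) show ?thesis unfolding irreducible_mat_def by simp
qed

theorem proposition4p1:
  fixes A :: "real mat" and n :: nat
  assumes "A \<in> carrier_mat n n" and "n \<ge> 1"
  shows "((\<exists>v. dim_vec v = n \<and> (\<forall>i<n. v $ i > 0) \<and> (transpose_mat A - 1\<^sub>m n) *\<^sub>v v = 0\<^sub>v n) \<and>
          (\<forall>d. dim_vec d = n \<and> (\<forall>i<n. d $ i \<ge> 0) \<and> d \<noteq> 0\<^sub>v n \<longrightarrow>
               nonsingular_M_matrix n (A - 1\<^sub>m n + diag_vec d)))
     \<longleftrightarrow> (irreducible_mat n (A - 1\<^sub>m n) \<and> singular_M_matrix n (A - 1\<^sub>m n))"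
proof -
  let ?M = "A - 1\<^sub>m n"
  have M: "?M \<in> carrier_mat n n" by (rule minus_carrier_mat[OF one_carrier_mat])
  have n: "0 < n" using assms(2) by simp
  have MT: "transpose_mat ?M = transpose_mat A - 1\<^sub>m n"
    using assms(1) by (simp add: transpose_minus[of _ n n])
  have "(\<exists>v. v \<in> carrier_vec n \<and> (\<forall>i<n. 0 < v $ i) \<and> transpose_mat ?M *\<^sub>v v = 0\<^sub>v n) \<and>
      (\<forall>d. d \<in> carrier_vec n \<longrightarrow> 0\<^sub>v n \<le> d \<longrightarrow> d \<noteq> 0\<^sub>v n \<longrightarrow> nonsingular_M_matrix n (?M + diag_vec d))
    \<longleftrightarrow> irreducible_mat n ?M \<and> singular_M_matrix n ?M"
  proof
    assume "(\<exists>v. v \<in> carrier_vec n \<and> (\<forall>i<n. 0 < v $ i) \<and> transpose_mat ?M *\<^sub>v v = 0\<^sub>v n) \<and>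
      (\<forall>d. d \<in> carrier_vec n \<longrightarrow> 0\<^sub>v n \<le> d \<longrightarrow> d \<noteq> 0\<^sub>v n \<longrightarrow> nonsingular_M_matrix n (?M + diag_vec d))"
    then obtain v where v: "v \<in> carrier_vec n" "\<And>i. i < n \<Longrightarrow> 0 < v $ i" "transpose_mat ?M *\<^sub>v v = 0\<^sub>v n"
      and pert: "\<And>d. d \<in> carrier_vec n \<Longrightarrow> 0\<^sub>v n \<le> d \<Longrightarrow> d \<noteq> 0\<^sub>v n \<Longrightarrow>
        nonsingular_M_matrix n (?M + diag_vec d)"
      by blast
    have Z: "Z_matrix n ?M" by (rule Z_matrix_if_diagonal_perturbations_nonsingular[OF M n pert])
    show "irreducible_mat n ?M \<and> singular_M_matrix n ?M"
      using irreducible_if_diagonal_perturbations_nonsingular[OF M Z v pert]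
        singular_M_matrix_if_positive_left_null_vector[OF M Z n v] by blast
  qed (use irreducible_singular_M_matrix_left_null_vector irreducible_singular_M_matrix_plus_diag_nonsingular
        n in metis)
  then show ?thesis
    unfolding MT less_eq_vec_iff[OF zero_carrier_vec] carrier_dim_vec by auto
qed

end
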